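(* Let $\mathrm{GNN}$ be a node-most-expressive GNN and let $f$ be any function of two node representations. Then the graph-autoencoder link representation $\Gamma(\{i,j\},{\mathcal A}) := f(\mathrm{GNN}(i,{\mathcal A}),\mathrm{GNN}(j,{\mathcal A}))$ is not a most expressive structural link representation: there exist a graph ${\mathcal A}$ and nodes $i,j,k$ such that $(\{i,j\},{\mathcal A})\not\simeq(\{i,k\},{\mathcal A})$ but $f(\mathrm{GNN}(i,{\mathcal A}),\mathrm{GNN}(j,{\mathcal A}))=f(\mathrm{GNN}(i,{\mathcal A}),\mathrm{GNN}(k,{\mathcal A}))$.
   Context: Graphs on $\{1,\dots,n\}$ are encoded by tensors ${\mathcal A}\in\mathbb R^{n\times n\times k}$ whose diagonal holds node features, off-diagonal entries edge features, and first slice the adjacency matrix. A permutation $\pi$ acts by $\pi(S)=\{\pi(i):i\in S\}$ and $\pi({\mathcal A})_{\pi(i),\pi(j),:}={\mathcal A}_{i,j,:}$; $(S,{\mathcal A})\simeq(S',{\mathcal A}')$ iff some $\pi$ has $S=\pi(S')$ and ${\mathcal A}=\pi({\mathcal A}')$. A GNN $(i,{\mathcal A})\mapsto\mathrm{GNN}(i,{\mathcal A})$ is node-most-expressive if $\mathrm{GNN}(i,{\mathcal A})=\mathrm{GNN}(j,{\mathcal A}')\iff(\{i\},{\mathcal A})\simeq(\{j\},{\mathcal A}')$. A permutation-invariant function $\Gamma$ is a most expressive structural representation if $\Gamma(S,{\mathcal A})=\Gamma(S',{\mathcal A}')\iff(S,{\mathcal A})\simeq(S',{\mathcal A}')$ for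 all $S,{\mathcal A},S',{\mathcal A}'$; for $|S|=2$ it is called a structural link representation. *)

theory Defs
  imports Complex_Main "HOL-Combinatorics.Permutations"
begin

text \<open>A graph on the nodes {0,...,n-1} (0-based instead of 1-based) with feature
dimension d is a tensor A : nat => nat => nat => real, where only the entries
A i j c with i, j < n and c < d are meaningful.  Slice c = 0 is the adjacency
matrix: off-diagonal entries are 0/1 and symmetric.\<close>

type_synonym tensor = "nat \<Rightarrow> nat \<Rightarrow> nat \<Rightarrow> real"

definition valid_graph :: "nat \<Rightarrow> nat \<Rightarrow> tensor \<Rightarrow> bool" where
  "valid_graph n d A \<longleftrightarrow>
     (\<forall>i<n. \<forall>j<n. i \<noteq> j \<longrightarrow> (A i j 0 = 0 \<or> A i j 0 = 1) \<and> A i j 0 = A j i 0)"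

definition joint_iso :: "nat \<Rightarrow> nat \<Rightarrow> nat set \<Rightarrow> tensor \<Rightarrow> nat set \<Rightarrow> tensor \<Rightarrow> bool" where
  "joint_iso n d S A S' A' \<longleftrightarrow>
     (\<exists>\<pi>. \<pi> permutes {..<n} \<and> S = \<pi> ` S' \<and>
          (\<forall>i<n. \<forall>j<n. \<forall>c<d. A (\<pi> i) (\<pi> j) c = A' i j c))"

definition node_most_expressive :: "nat \<Rightarrow> (nat \<Rightarrow> nat \<Rightarrow> tensor \<Rightarrow> 'r) \<Rightarrow> bool" where
  "node_most_expressive d GNN \<longleftrightarrow>
     (\<forall>n A A' i j. valid_graph n d A \<and> valid_graph n d A' \<and> i < n \<and> j < n \<longrightarrow>
        (GNN n i A = GNN n j A' \<longleftrightarrow> joint_iso n d {i} A {j} A'))"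

end

theory Submission
  imports Defs
begin

text \<open>In the graph with the two disjoint edges 0--1 and 2--3, the automorphism swapping
the edges maps node 2 to node 1, so a node-most-expressive GNN gives nodes 1 and 2 the
same representation and hence f cannot separate the links {0,1} and {0,2}. These links
are not isomorphic, because joint isomorphisms of links preserve adjacency of their
endpoints and only {0,1} is an edge.\<close>

lemma joint_iso_link_adjacency:
  assumes iso: "joint_iso n d {i, j} A {i', j'} A'"
    and "d \<ge> 1" and "valid_graph n d A" and "i' < n" and "j' < n"
  shows "A i j 0 = A' i' j' 0"
proof -
  from iso obtain \<pi> where \<pi>: "\<pi> permutes {..<n}" and link: "{i, j} = {\<pi> i', \<pi> j'}"
    and entries: "\<forall>a<n. \<forall>b<n. \<forall>c<d. A (\<pi> a) (\<pi> b) c = A' a b c"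
    unfolding joint_iso_def by auto
  have "A (\<pi> i') (\<pi> j') 0 = A' i' j' 0"
    using entries \<open>d \<ge> 1\<close> \<open>i' < n\<close> \<open>j' < n\<close> by auto
  moreover have "i < n" "j < n"
    using link permutes_in_image[OF \<pi>] \<open>i' < n\<close> \<open>j' < n\<close> by (auto simp: doubleton_eq_iff)
  then have "A j i 0 = A i j 0"
    using \<open>valid_graph n d A\<close> unfolding valid_graph_def by (cases "i = j") auto
  ultimately show ?thesis
    using link by (auto simp: doubleton_eq_iff)
qed

lemma node_most_expressive_automorphic_nodes:
  assumes "node_most_expressive d GNN" and "valid_graph n d A" and "k < n"
    and \<pi>: "\<pi> permutes {..<n}" and "\<forall>i<n. \<forall>j<n. \<forall>c<d. A (\<pi> i) (\<pi> j) c = A i j c"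
  shows "GNN n (\<pi> k) A = GNN n k A"
proof -
  have "joint_iso n d {\<pi> k} A {k} A"
    unfolding joint_iso_def using assms(5) \<pi> by auto
  moreover have "\<pi> k < n"
    using permutes_in_image[OF \<pi>] \<open>k < n\<close> by simp
  ultimately show ?thesis
    using assms(1-3) unfolding node_most_expressive_def by blast
qed

definition two_disjoint_edges :: tensor where
  "two_disjoint_edges a b c =
     (if c = 0 \<and> (a, b) \<in> {(0, 1), (1, 0), (2, 3), (3, 2)} then 1 else 0)"

lemma valid_graph_two_disjoint_edges: "valid_graph 4 d two_disjoint_edges"
  unfolding valid_graph_def two_disjoint_edges_def by auto

definition swap_edges :: "nat \<Rightarrow> nat" where
  "swap_edges = transpose 0 3 \<circ> transpose 1 2"

lemma swap_edges_permutes: "swap_edges permutes {..<4}"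
  unfolding swap_edges_def by (intro permutes_compose permutes_swap_id) auto

lemma swap_edges_automorphism:
  "\<forall>i<4. \<forall>j<4. \<forall>c<d.
     two_disjoint_edges (swap_edges i) (swap_edges j) c = two_disjoint_edges i j c"
proof (intro allI impI)
  fix i j c :: nat
  assume "i < 4" "j < 4"
  then have "i \<in> {0, 1, 2, 3}" "j \<in> {0, 1, 2, 3}" by auto
  then show "two_disjoint_edges (swap_edges i) (swap_edges j) c = two_disjoint_edges i j c"
    by (auto simp: swap_edges_def transpose_def two_disjoint_edges_def)
qed

theorem proposition1:
  fixes d :: nat
    and GNN :: "nat \<Rightarrow> nat \<Rightarrow> tensor \<Rightarrow> 'r"
    and f :: "'r \<Rightarrow> 'r \<Rightarrow> 'b"
  assumes "d \<ge> 1"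
    and "node_most_expressive d GNN"
  shows "\<exists>n A i j k. valid_graph n d A \<and> i < n \<and> j < n \<and> k < n \<and> i \<noteq> j \<and> i \<noteq> k \<and>
           \<not> joint_iso n d {i, j} A {i, k} A \<and>
           f (GNN n i A) (GNN n j A) = f (GNN n i A) (GNN n k A)"
proof -
  let ?A = two_disjoint_edges
  have valid: "valid_graph 4 d ?A"
    by (rule valid_graph_two_disjoint_edges)
  have "\<not> joint_iso 4 d {0, 1} ?A {0, 2} ?A"
  proof
    assume "joint_iso 4 d {0, 1} ?A {0, 2} ?A"
    then have "?A 0 1 0 = ?A 0 2 0"
      using joint_iso_link_adjacency \<open>d \<ge> 1\<close> valid by fastforce
    then show False
      by (simp add: two_disjoint_edges_def)
  qed
  moreover have "GNN 4 (swap_edges 2) ?A = GNN 4 2 ?A"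
    using node_most_expressive_automorphic_nodes[OF assms(2) valid _ swap_edges_permutes
        swap_edges_automorphism] by simp
  then have "GNN 4 1 ?A = GNN 4 2 ?A"
    by (simp add: swap_edges_def transpose_def)
  ultimately show ?thesis
    using valid by (intro exI[of _ 4] exI[of _ ?A] exI[of _ 0] exI[of _ 1] exI[of _ 2]) auto
qed

end
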